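(* Consider the $n$-order direct filter, for $i=1,\dots,m$, \[ \begin{cases} x_{i}^{(n-1)} = -\sum_{k=1}^{n-1}\gamma_{ik}x_{i}^{(n-k-1)}+\gamma_{in}(b_{i}-\hat{b}_{i}),\\ \dot{\hat{b}}_{i} = -S(\omega_{m}-\hat{\eta})b_{i}+x_{i},\\ \dot{\hat{\eta}} = \Gamma_{d}\sum_{i=1}^{m}S(b_{i})\upsilon_{i}, \end{cases} \qquad \upsilon_{i}=B_{di}^{T}P_{di}z_{i}, \] under the assumptions that at least two of the measured vectors $b_i$ are non-collinear, and that the gyro bias $\eta$ is bounded and constant ($\dot\eta=0$) and the measured angular velocity $\omega_m(\cdot)$ (hence $\omega(\cdot)$) is bounded. Then the errors $\tilde{b}_{i}=b_{i}-\hat{b}_{i}$, $i=1,\dots,m$, and $\tilde{\eta}=\eta-\hat{\eta}$ converge globally asymptotically to zero.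
   Context: A rigid body has attitude $R\in SO(3)$ with $\dot R=RS(\omega)$, where $\omega$ is the body angular velocity and $S(x)$ is the skew-symmetric matrix with $S(x)y=x\times y$. Given constant inertial vectors $r_i$, $i=1,\dots,m$, the body-frame measurements are $b_i=R^Tr_i$, so $\dot b_i=-S(\omega)b_i$. The rate gyro measures $\omega_m=\omega+\eta$ with unknown bias $\eta$, giving $\dot b_i=-S(\omega_m-\eta)b_i$, $\dot\eta=0$. For each $i$, $\Upsilon_i=(\gamma_{i1},\dots,\gamma_{in})\in\mathbb{R}^n$ is chosen so that the polynomial $s^n+\sum_{k=1}^n\gamma_{ik}s^{n-k}$ is Hurwitz; $x_i^{(j)}$ denotes the $j$-th time derivative of $x_i\in\mathbb{R}^3$. Set $z_i=[x_i^T,\dot x_i^T,\dots,x_i^{(n-1)T}]^T\in\mathbb{R}^{3n}$, $A_{di}=A_{\Upsilon_i}\otimes I_3$ where $A_{\Upsilon_i}$ is the $n\times n$ companion matrix (ones on the superdiagonal, last row $(-\gamma_{in},-\gamma_{i,n-1},\dots,-\gamma_{i1})$), $B_{di}=\gamma_{in}e_n\otimes I_3$ with $e_n=(0,\dots,0,1)^T$, and $P_{di}$ the symmetric positive definite solution of $A_{di}^TP_{di}+P_{di}A_{di}=-Q_{di}$ for a given symmetric positive definite $Q_{di}$. $\Gamma_d$ is a positive definite diagonal gain matrix. *)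

theory Defs
  imports "HOL-Analysis.Analysis" "HOL-Analysis.Cross3"
begin

definition skew :: "real^3 \<Rightarrow> real^3^3" where
  "skew x = matrix (\<lambda>y. cross3 x y)"

definition hurwitz_coeffs :: "nat \<Rightarrow> (nat \<Rightarrow> real) \<Rightarrow> bool" where
  "hurwitz_coeffs n g \<longleftrightarrow>
     (\<forall>s::complex. s ^ n + (\<Sum>k=1..n. complex_of_real (g k) * s ^ (n - k)) = 0 \<longrightarrow> Re s < 0)"

text \<open>Companion matrix A_Upsilon (n x n, 0-based indices j,l < n): ones on the
  superdiagonal, last row (-g n, -g (n-1), ..., -g 1).\<close>
definition companion :: "nat \<Rightarrow> (nat \<Rightarrow> real) \<Rightarrow> nat \<Rightarrow> nat \<Rightarrow> real" where
  "companion n g j l = (if j + 1 < n then (if l = j + 1 then 1 else 0) else - g (n - l))"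

text \<open>A 3n x 3n (resp. 3n x 3) real matrix is represented by its 3 x 3 blocks,
  indexed by block indices j,l < n.  A_d = A_Upsilon (Kronecker) I_3.\<close>
definition Ad :: "nat \<Rightarrow> (nat \<Rightarrow> real) \<Rightarrow> nat \<Rightarrow> nat \<Rightarrow> real^3^3" where
  "Ad n g j l = companion n g j l *\<^sub>R mat 1"

text \<open>B_d = g n e_n (Kronecker) I_3, a 3n x 3 matrix given by its blocks j < n.\<close>
definition Bd :: "nat \<Rightarrow> (nat \<Rightarrow> real) \<Rightarrow> nat \<Rightarrow> real^3^3" where
  "Bd n g j = (if j = n - 1 then g n *\<^sub>R mat 1 else 0)"

definition blk_transpose :: "(nat \<Rightarrow> nat \<Rightarrow> real^3^3) \<Rightarrow> nat \<Rightarrow> nat \<Rightarrow> real^3^3" where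
  "blk_transpose M j l = transpose (M l j)"

definition blk_mult :: "nat \<Rightarrow> (nat \<Rightarrow> nat \<Rightarrow> real^3^3) \<Rightarrow> (nat \<Rightarrow> nat \<Rightarrow> real^3^3)
    \<Rightarrow> nat \<Rightarrow> nat \<Rightarrow> real^3^3" where
  "blk_mult n M N j l = (\<Sum>p<n. M j p ** N p l)"

definition blk_symmetric :: "nat \<Rightarrow> (nat \<Rightarrow> nat \<Rightarrow> real^3^3) \<Rightarrow> bool" where
  "blk_symmetric n M \<longleftrightarrow> (\<forall>j<n. \<forall>l<n. M l j = transpose (M j l))"

definition blk_quad :: "nat \<Rightarrow> (nat \<Rightarrow> nat \<Rightarrow> real^3^3) \<Rightarrow> (nat \<Rightarrow> real^3) \<Rightarrow> real" where
  "blk_quad n M z = (\<Sum>j<n. \<Sum>l<n. z j \<bullet> (M j l *v z l))"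

definition blk_posdef :: "nat \<Rightarrow> (nat \<Rightarrow> nat \<Rightarrow> real^3^3) \<Rightarrow> bool" where
  "blk_posdef n M \<longleftrightarrow> (\<forall>z. (\<exists>j<n. z j \<noteq> 0) \<longrightarrow> 0 < blk_quad n M z)"

definition lyapunov_eq :: "nat \<Rightarrow> (nat \<Rightarrow> nat \<Rightarrow> real^3^3) \<Rightarrow> (nat \<Rightarrow> nat \<Rightarrow> real^3^3)
    \<Rightarrow> (nat \<Rightarrow> nat \<Rightarrow> real^3^3) \<Rightarrow> bool" where
  "lyapunov_eq n A P Q \<longleftrightarrow>
     (\<forall>j<n. \<forall>l<n. blk_mult n (blk_transpose A) P j l + blk_mult n P A j l = - Q j l)"

definition upsilon :: "nat \<Rightarrow> (nat \<Rightarrow> real) \<Rightarrow> (nat \<Rightarrow> nat \<Rightarrow> real^3^3) \<Rightarrow> (nat \<Rightarrow> real^3) \<Rightarrow> real^3" where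
  "upsilon n g P z = (\<Sum>j<n. transpose (Bd n g j) *v (\<Sum>l<n. P j l *v z l))"

definition diag_posdef :: "real^3^3 \<Rightarrow> bool" where
  "diag_posdef G \<longleftrightarrow> (\<forall>a b. a \<noteq> b \<longrightarrow> G $ a $ b = 0) \<and> (\<forall>a. 0 < G $ a $ a)"

end

(*
  V = sum_i z_i^T P_di z_i + eta~^T Gamma_d^-1 eta~ is a Lyapunov function for the error system
  z_i' = A_di z_i + B_di (eta~ x b_i), eta~' = -Gamma_d sum_i S(b_i) upsilon_i: the Lyapunov equation
  turns the z-part of V' into -sum_i z_i^T Q_di z_i, and the bias update is chosen so that the
  remaining cross terms 2 upsilon_i . (eta~ x b_i) cancel.  Hence z_i and eta~ are bounded, V
  converges, and Barbalat's lemma gives V' -> 0, so z_i -> 0 and b~_i -> 0 by the last filter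
  equation.  Barbalat's lemma applied to the last filter state, whose second derivative is bounded,
  gives eta~ x b_i -> 0, and since two of the b_i = R^T r_i are non-collinear this forces eta~ -> 0.
*)
theory Submission
  imports Defs
begin

unbundle cross3_syntax

section \<open>Cross products and rotations\<close>

lemma skew_mult_vec [simp]: "skew x *v y = x \<times> y"
proof -
  have "Vector_Spaces.linear (*s) (*s) (cross3 x)"
    using bilinear_cross by (simp add: bilinear_def linear_def scalar_mult_eq_scaleR)
  then show ?thesis unfolding skew_def by (rule matrix_works)
qed

lemma vector_mult_skew: "y v* skew x = y \<times> x"
proof -
  have "(y v* skew x) $ k = (y \<times> x) $ k" for k
  proof -
    have "(y v* skew x) $ k = (x \<times> axis k 1) \<bullet> y"
      unfolding vector_matrix_mult_def skew_def matrix_def inner_vec_def by (simp add: mult.commute)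
    also have "\<dots> = (y \<times> x) \<bullet> axis k 1" by (rule cross_triple[symmetric])
    finally show ?thesis by (simp add: inner_axis)
  qed
  then show ?thesis by (simp add: vec_eq_iff)
qed

lemma bounded_bilinear_cross: "bounded_bilinear cross3"
  using bilinear_conv_bounded_bilinear bilinear_cross by blast

lemma bounded_linear_matrix_vector_mult: "bounded_linear ((*v) (M :: real^'n^'m))"
  by (simp add: linear_conv_bounded_linear matrix_vector_mul_linear)

lemma bounded_linear_vector_matrix_mult: "bounded_linear (\<lambda>M :: real^'m^'n. x v* M)"
  unfolding linear_conv_bounded_linear[symmetric]
  by (rule linearI) (simp_all add: vector_matrix_mult_def vec_eq_iff sum.distrib sum_distrib_left algebra_simps)

lemma norm_orthogonal_matrix_mult_vec:
  fixes A :: "real^'n^'n"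
  shows "orthogonal_matrix A \<Longrightarrow> norm (A *v x) = norm x"
  using orthogonal_transformation_matrix[of "(*v) A"] orthogonal_transformation_norm by simp

lemma rotation_matrix_transpose: "rotation_matrix A \<Longrightarrow> rotation_matrix (transpose A)"
  by (simp add: rotation_matrix_def det_transpose)

lemma norm_cross_transpose_rotation:
  assumes "rotation_matrix A"
  shows "norm (e \<times> (transpose A *v r)) = norm ((A *v e) \<times> r)"
proof -
  have "orthogonal_matrix A" using assms by (simp add: rotation_matrix_def)
  then have "transpose A *v (A *v e) = e"
    by (simp add: orthogonal_matrix_def matrix_vector_mul_assoc)
  then have "e \<times> (transpose A *v r) = transpose A *v ((A *v e) \<times> r)"
    using cross_rotation_matrix[OF rotation_matrix_transpose[OF assms]] by metis
  then show ?thesis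
    using \<open>orthogonal_matrix A\<close> norm_orthogonal_matrix_mult_vec[of "transpose A"] by simp
qed

lemma collinear_matrix_vector_mult:
  fixes M :: "real^'n^'m"
  assumes "collinear {0, x, y}"
  shows "collinear {0, M *v x, M *v y}"
  using assms by (auto simp: collinear_lemma matrix_vector_mult_scaleR)

lemma noncollinear_cross_coercive:
  fixes a b :: "real^3"
  assumes "\<not> collinear {0, a, b}"
  obtains c where "c > 0" "\<And>u. c * norm u \<le> norm (u \<times> a) + norm (u \<times> b)"
proof -
  define h where "h u = norm (u \<times> a) + norm (u \<times> b)" for u
  have "continuous_on (sphere 0 1) h"
    unfolding h_def by (intro continuous_intros bounded_bilinear.continuous_on[OF bounded_bilinear_cross])
  moreover have "sphere (0::real^3) 1 \<noteq> {}"
    using norm_axis_1[of 1] by (metis mem_sphere_0 empty_iff)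
  ultimately obtain w where w: "w \<in> sphere 0 1" and w_min: "\<And>v. v \<in> sphere 0 1 \<Longrightarrow> h w \<le> h v"
    using continuous_attains_inf[OF compact_sphere] by metis
  have "h w \<noteq> 0"
  proof
    assume "h w = 0"
    then have "w \<times> a = 0" "w \<times> b = 0"
      unfolding h_def by (simp_all add: add_nonneg_eq_0_iff)
    moreover have "w \<noteq> 0" using w by auto
    ultimately obtain ka kb where "a = ka *\<^sub>R w" "b = kb *\<^sub>R w"
      by (auto simp: cross_eq_0 collinear_lemma)
    with assms show False by (simp add: collinear_scaleR_iff)
  qed
  then have "h w > 0" by (simp add: h_def add_nonneg_nonneg order_le_neq_trans)
  moreover have "h w * norm u \<le> h u" for u
  proof (cases "u = 0")
    case False
    have "h w \<le> h ((1 / norm u) *\<^sub>R u)" using False by (intro w_min) simp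
    also have "\<dots> = h u / norm u"
      using False by (simp add: h_def cross_mult_left add_divide_distrib)
    finally show ?thesis using False by (simp add: field_simps)
  qed (simp add: h_def)
  ultimately show thesis using that unfolding h_def by blast
qed

section \<open>Bounded functions and Barbalat's lemma on the half-line\<close>

lemma (in bounded_bilinear) bounded_comp:
  assumes "bounded (f ` S)" "bounded (g ` S)"
  shows "bounded ((\<lambda>x. prod (f x) (g x)) ` S)"
proof -
  obtain A B where A: "\<And>x. x \<in> S \<Longrightarrow> norm (f x) \<le> A" and B: "\<And>x. x \<in> S \<Longrightarrow> norm (g x) \<le> B"
    using assms by (auto simp: bounded_iff)
  obtain K where K: "\<And>a b. norm (prod a b) \<le> norm a * norm b * K" "K \<ge> 0"
    using nonneg_bounded by blast
  have "norm (prod (f x) (g x)) \<le> A * B * K" if "x \<in> S" for x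
  proof -
    have "norm (f x) * norm (g x) \<le> A * B"
      using A[OF that] B[OF that] by (intro mult_mono) (auto intro: order_trans[OF norm_ge_zero])
    then show ?thesis using K by (meson mult_right_mono order_trans)
  qed
  then show ?thesis by (intro boundedI) auto
qed

lemma (in bounded_linear) bounded_comp: "bounded (g ` S) \<Longrightarrow> bounded ((\<lambda>x. f (g x)) ` S)"
  using bounded_linear_image[OF _ bounded_linear_axioms, of "g ` S"] by (simp add: image_image)

lemma bounded_const_comp: "bounded ((\<lambda>x. c :: 'a::real_normed_vector) ` S)"
  by (rule boundedI[of _ "norm c"]) auto

lemma bounded_sum_comp:
  fixes f :: "'i \<Rightarrow> 'a \<Rightarrow> 'b::real_normed_vector"
  shows "(\<And>i. i \<in> I \<Longrightarrow> bounded (f i ` S)) \<Longrightarrow> bounded ((\<lambda>x. \<Sum>i\<in>I. f i x) ` S)"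
  by (induct I rule: infinite_finite_induct) (auto simp: bounded_const_comp intro: bounded_plus_comp)

lemma norm_diff_le_of_vector_derivative_bound:
  fixes f :: "real \<Rightarrow> 'a::real_normed_vector"
  assumes "convex S"
    and "\<And>s. s \<in> S \<Longrightarrow> (f has_vector_derivative f' s) (at s within S)"
    and "\<And>s. s \<in> S \<Longrightarrow> norm (f' s) \<le> B"
    and "x \<in> S" "y \<in> S"
  shows "norm (f x - f y) \<le> B * \<bar>x - y\<bar>"
proof -
  have "onorm (\<lambda>h. h *\<^sub>R f' s) = norm (f' s)" for s
    using onorm_scaleR_left[OF bounded_linear_ident, of "f' s"] onorm_id[where 'a=real] by simp
  then show ?thesis
    using differentiable_bound[of S f "\<lambda>s h. h *\<^sub>R f' s"] assms
    by (simp add: has_vector_derivative_def)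
qed

lemma uniformly_continuous_on_bounded_vector_derivative:
  fixes g :: "real \<Rightarrow> 'a::real_normed_vector"
  assumes "\<And>t. t \<ge> 0 \<Longrightarrow> (g has_vector_derivative g' t) (at t within {0..})"
    and "bounded (g' ` {0..})"
  shows "uniformly_continuous_on {0..} g"
proof -
  obtain B where "B > 0" "\<And>t. t \<ge> 0 \<Longrightarrow> norm (g' t) \<le> B"
    using assms(2) unfolding bounded_pos by auto
  then have "B-lipschitz_on {0..} g"
    using norm_diff_le_of_vector_derivative_bound[of "{0..}" g g' B] assms(1)
    by (intro lipschitz_onI) (auto simp: dist_norm less_imp_le)
  then show ?thesis by (rule lipschitz_on_uniformly_continuous)
qed

lemma nonincreasing_of_nonpos_derivative:
  fixes V :: "real \<Rightarrow> real"
  assumes "\<And>t. t \<ge> 0 \<Longrightarrow> (V has_real_derivative V' t) (at t within {0..})"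
    and "\<And>t. t \<ge> 0 \<Longrightarrow> V' t \<le> 0"
    and "0 \<le> s" "s \<le> t"
  shows "V t \<le> V s"
proof -
  have "(V has_derivative (\<lambda>h. V' x * h)) (at x within {s..t})" if "s \<le> x" "x \<le> t" for x
    using assms(1)[of x] that \<open>0 \<le> s\<close>
    by (auto simp: has_field_derivative_def intro: has_derivative_subset)
  then obtain x where "x \<in> {s..t}" "V t - V s = V' x * (t - s)"
    using mvt_very_simple[where f=V and f'="\<lambda>x h. V' x * h", OF \<open>s \<le> t\<close>] by blast
  moreover have "V' x * (t - s) \<le> 0"
    using assms(2)[of x] \<open>x \<in> {s..t}\<close> \<open>0 \<le> s\<close> by (simp add: mult_nonpos_nonneg)
  ultimately show ?thesis by linarith
qed

lemma nonincreasing_tendsto_INF: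
  fixes V :: "real \<Rightarrow> real"
  assumes mono: "\<And>s t. 0 \<le> s \<Longrightarrow> s \<le> t \<Longrightarrow> V t \<le> V s"
    and below: "\<And>t. t \<ge> 0 \<Longrightarrow> B \<le> V t"
  shows "(V \<longlongrightarrow> (INF t\<in>{0..}. V t)) at_top"
proof -
  have bdd: "bdd_below (V ` {0..})" using below by (metis atLeast_iff bdd_belowI2)
  show ?thesis
  proof (rule order_tendstoI)
    fix a assume "a < (INF t\<in>{0..}. V t)"
    then have "a < V t" if "t \<ge> 0" for t
      using cINF_lower[OF bdd, of t] that by simp
    then show "eventually (\<lambda>t. a < V t) at_top"
      by (auto simp: eventually_at_top_linorder)
  next
    fix a assume "(INF t\<in>{0..}. V t) < a"
    then obtain T where "T \<ge> 0" "V T < a" using bdd by (auto simp: cINF_less_iff)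
    then have "V t < a" if "t \<ge> T" for t using mono[of T t] that by simp
    then show "eventually (\<lambda>t. V t < a) at_top"
      by (auto simp: eventually_at_top_linorder)
  qed
qed

lemma norm_increment_le_of_vector_derivative:
  fixes y g :: "real \<Rightarrow> 'a::real_normed_vector"
  assumes "h \<ge> 0"
    and "\<And>s. s \<in> {t..t + h} \<Longrightarrow> (y has_vector_derivative g s) (at s within {t..t + h})"
    and "\<And>s. s \<in> {t..t + h} \<Longrightarrow> norm (g s - g t) \<le> e"
  shows "norm (y (t + h) - y t - h *\<^sub>R g t) \<le> e * h"
proof -
  have "norm ((y (t + h) - (t + h) *\<^sub>R g t) - (y t - t *\<^sub>R g t)) \<le> e * \<bar>(t + h) - t\<bar>"
  proof (rule norm_diff_le_of_vector_derivative_bound[of "{t..t + h}"])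
    show "((\<lambda>s. y s - s *\<^sub>R g t) has_vector_derivative g s - g t) (at s within {t..t + h})"
      if "s \<in> {t..t + h}" for s
      using assms(2)[OF that] by (auto intro!: derivative_eq_intros)
  qed (use assms in auto)
  then show ?thesis using \<open>h \<ge> 0\<close> by (simp add: algebra_simps)
qed

lemma barbalat:
  fixes y g :: "real \<Rightarrow> 'a::real_normed_vector"
  assumes y_lim: "(y \<longlongrightarrow> l) at_top"
    and y_deriv: "\<And>t. t \<ge> 0 \<Longrightarrow> (y has_vector_derivative g t) (at t within {0..})"
    and g_uc: "uniformly_continuous_on {0..} g"
  shows "(g \<longlongrightarrow> 0) at_top"
proof (rule tendstoI)
  fix \<epsilon> :: real assume "\<epsilon> > 0"
  then obtain d where "d > 0" and d: "\<And>s t. s \<ge> 0 \<Longrightarrow> t \<ge> 0 \<Longrightarrow> dist s t < d \<Longrightarrow> dist (g s) (g t) < \<epsilon> / 2"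
    using g_uc unfolding uniformly_continuous_on_def by (metis atLeast_iff half_gt_zero)
  define h where "h = d / 2"
  have "h > 0" "h < d" using \<open>d > 0\<close> by (simp_all add: h_def)
  have "h * \<epsilon> / 4 > 0" using \<open>\<epsilon> > 0\<close> \<open>h > 0\<close> by simp
  from tendstoD[OF y_lim this] obtain T where T: "\<And>t. t \<ge> T \<Longrightarrow> norm (y t - l) < h * \<epsilon> / 4"
    by (auto simp: eventually_at_top_linorder dist_norm)
  have "norm (g t) < \<epsilon>" if "t \<ge> max T 0" for t
  proof -
    have "norm (y (t + h) - y t - h *\<^sub>R g t) \<le> \<epsilon> / 2 * h"
    proof (rule norm_increment_le_of_vector_derivative)
      fix s assume s: "s \<in> {t..t + h}"
      show "(y has_vector_derivative g s) (at s within {t..t + h})"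
        using y_deriv[of s] s that by (auto intro: has_vector_derivative_within_subset)
      show "norm (g s - g t) \<le> \<epsilon> / 2"
        using d[of s t] s that \<open>h < d\<close> by (auto simp: dist_norm)
    qed (use \<open>h > 0\<close> in simp)
    moreover have "norm (y (t + h) - y t) < h * \<epsilon> / 2"
      using T[of t] T[of "t + h"] that \<open>h > 0\<close> norm_triangle_ineq4[of "y (t + h) - l" "y t - l"]
      by simp
    moreover have "h * norm (g t) \<le> norm (y (t + h) - y t) + norm (y (t + h) - y t - h *\<^sub>R g t)"
      using norm_triangle_sub[of "h *\<^sub>R g t" "y (t + h) - y t"] \<open>h > 0\<close>
      by (simp add: norm_minus_commute)
    ultimately have "h * norm (g t) < h * \<epsilon>" by (simp add: algebra_simps)
    then show ?thesis using \<open>h > 0\<close> by simp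
  qed
  then show "eventually (\<lambda>t. dist (g t) 0 < \<epsilon>) at_top"
    by (auto simp: eventually_at_top_linorder intro!: exI[of _ "max T 0"])
qed

section \<open>Block vectors and block matrices\<close>

lemma inner_matrix_vector_mult_transpose: "x \<bullet> (transpose M *v y) = (M *v x) \<bullet> (y :: real^'n)"
  by (metis dot_lmul_matrix inner_commute vector_transpose_matrix transpose_transpose)

lemma matrix_vector_mult_sum: "(M :: real^'n^'m) *v sum f S = (\<Sum>x\<in>S. M *v f x)"
  by (induct S rule: infinite_finite_induct) (simp_all add: matrix_vector_right_distrib)

lemma sum_matrix_vector_mult: "(sum f S :: real^'n^'m) *v x = (\<Sum>p\<in>S. f p *v x)"
  by (induct S rule: infinite_finite_induct) (simp_all add: matrix_vector_mult_add_rdistrib)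

lemma uminus_matrix_vector_mult: "(- M) *v x = - ((M :: real^'n^'m) *v x)"
  by (simp add: matrix_vector_mult_def vec_eq_iff sum_negf)

definition blk_mult_vec :: "nat \<Rightarrow> (nat \<Rightarrow> nat \<Rightarrow> real^3^3) \<Rightarrow> (nat \<Rightarrow> real^3) \<Rightarrow> nat \<Rightarrow> real^3"
  where "blk_mult_vec n M z j = (\<Sum>p<n. M j p *v z p)"

definition blk_form :: "nat \<Rightarrow> (nat \<Rightarrow> nat \<Rightarrow> real^3^3) \<Rightarrow> (nat \<Rightarrow> real^3) \<Rightarrow> (nat \<Rightarrow> real^3) \<Rightarrow> real"
  where "blk_form n M w z = (\<Sum>j<n. \<Sum>l<n. w j \<bullet> (M j l *v z l))"

lemma blk_quad_eq_blk_form: "blk_quad n M z = blk_form n M z z"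
  by (simp add: blk_quad_def blk_form_def)

lemma blk_form_add_left: "blk_form n M (\<lambda>j. v j + w j) z = blk_form n M v z + blk_form n M w z"
  by (simp add: blk_form_def inner_add_left sum.distrib)

lemma blk_form_add_right: "blk_form n M w (\<lambda>j. y j + z j) = blk_form n M w y + blk_form n M w z"
  by (simp add: blk_form_def matrix_vector_right_distrib inner_add_right sum.distrib)

lemma blk_form_add_matrix:
  "blk_form n (\<lambda>j l. M j l + N j l) w z = blk_form n M w z + blk_form n N w z"
  by (simp add: blk_form_def matrix_vector_mult_add_rdistrib inner_add_right sum.distrib)

lemma blk_form_uminus_matrix: "blk_form n (\<lambda>j l. - M j l) w z = - blk_form n M w z"
  by (simp add: blk_form_def uminus_matrix_vector_mult sum_negf)

lemma blk_form_cong_matrix: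
  "(\<And>j l. j < n \<Longrightarrow> l < n \<Longrightarrow> M j l = N j l) \<Longrightarrow> blk_form n M w z = blk_form n N w z"
  by (simp add: blk_form_def)

lemma blk_form_commute:
  assumes "blk_symmetric n M"
  shows "blk_form n M w z = blk_form n M z w"
proof -
  have "w j \<bullet> (M j l *v z l) = z l \<bullet> (M l j *v w j)" if "j < n" "l < n" for j l
  proof -
    have "M l j = transpose (M j l)" using assms that unfolding blk_symmetric_def by blast
    then show ?thesis by (metis inner_commute inner_matrix_vector_mult_transpose)
  qed
  then have "blk_form n M w z = (\<Sum>j<n. \<Sum>l<n. z l \<bullet> (M l j *v w j))"
    unfolding blk_form_def by simp
  also have "\<dots> = blk_form n M z w"
    unfolding blk_form_def by (rule sum.swap)
  finally show ?thesis .
qed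

lemma blk_form_mult_vec_left:
  "blk_form n M (blk_mult_vec n A w) z = blk_form n (blk_mult n (blk_transpose A) M) w z"
proof -
  have "blk_form n M (blk_mult_vec n A w) z
      = (\<Sum>j<n. \<Sum>l<n. \<Sum>p<n. w p \<bullet> (transpose (A j p) *v (M j l *v z l)))"
    unfolding blk_form_def blk_mult_vec_def
    by (simp only: inner_sum_left inner_matrix_vector_mult_transpose)
  also have "\<dots> = (\<Sum>j<n. \<Sum>p<n. \<Sum>l<n. w p \<bullet> (transpose (A j p) *v (M j l *v z l)))"
    by (rule sum.cong[OF refl]) (rule sum.swap)
  also have "\<dots> = (\<Sum>p<n. \<Sum>j<n. \<Sum>l<n. w p \<bullet> (transpose (A j p) *v (M j l *v z l)))"
    by (rule sum.swap)
  also have "\<dots> = (\<Sum>p<n. \<Sum>l<n. \<Sum>j<n. w p \<bullet> (transpose (A j p) *v (M j l *v z l)))"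
    by (rule sum.cong[OF refl]) (rule sum.swap)
  also have "\<dots> = blk_form n (blk_mult n (blk_transpose A) M) w z"
    unfolding blk_form_def blk_mult_def blk_transpose_def
    by (simp only: sum_matrix_vector_mult matrix_vector_mul_assoc inner_sum_right)
  finally show ?thesis .
qed

lemma blk_form_mult_vec_right:
  "blk_form n M w (blk_mult_vec n A z) = blk_form n (blk_mult n M A) w z"
proof -
  have "blk_form n M w (blk_mult_vec n A z) = (\<Sum>j<n. \<Sum>l<n. \<Sum>p<n. w j \<bullet> (M j l *v (A l p *v z p)))"
    unfolding blk_form_def blk_mult_vec_def by (simp only: matrix_vector_mult_sum inner_sum_right)
  also have "\<dots> = (\<Sum>j<n. \<Sum>p<n. \<Sum>l<n. w j \<bullet> (M j l *v (A l p *v z p)))"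
    by (rule sum.cong[OF refl]) (rule sum.swap)
  also have "\<dots> = blk_form n (blk_mult n M A) w z"
    unfolding blk_form_def blk_mult_def
    by (simp only: sum_matrix_vector_mult matrix_vector_mul_assoc inner_sum_right)
  finally show ?thesis .
qed

lemma lyapunov_eq_blk_form:
  fixes z w :: "nat \<Rightarrow> real^3"
  assumes sym: "blk_symmetric n P" and lyap: "lyapunov_eq n A P Q"
  defines "z' \<equiv> \<lambda>j. blk_mult_vec n A z j + w j"
  shows "blk_form n P z' z + blk_form n P z z' = - blk_quad n Q z + 2 * blk_form n P w z"
proof -
  have "blk_form n P z' z = blk_form n (blk_mult n (blk_transpose A) P) z z + blk_form n P w z"
    unfolding z'_def blk_form_add_left blk_form_mult_vec_left ..
  moreover have "blk_form n P z z' = blk_form n (blk_mult n P A) z z + blk_form n P w z"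
    unfolding z'_def blk_form_add_right blk_form_mult_vec_right blk_form_commute[OF sym, of z w] ..
  moreover have "blk_form n (blk_mult n (blk_transpose A) P) z z + blk_form n (blk_mult n P A) z z
      = - blk_quad n Q z"
  proof -
    have "blk_form n (\<lambda>j l. blk_mult n (blk_transpose A) P j l + blk_mult n P A j l) z z
        = blk_form n (\<lambda>j l. - Q j l) z z"
      using lyap unfolding lyapunov_eq_def by (intro blk_form_cong_matrix) auto
    then show ?thesis
      by (simp only: blk_form_add_matrix blk_form_uminus_matrix blk_quad_eq_blk_form)
  qed
  ultimately show ?thesis by linarith
qed

lemma blk_form_Bd_upsilon: "blk_form n P (\<lambda>j. Bd n g j *v v) z = v \<bullet> upsilon n g P z"
  unfolding blk_form_def upsilon_def
  by (simp only: inner_sum_right inner_matrix_vector_mult_transpose)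

lemma blk_quad_scaleR: "blk_quad n M (\<lambda>j. c *\<^sub>R z j) = c\<^sup>2 * blk_quad n M z"
  unfolding blk_quad_def
  by (simp add: sum_distrib_left power2_eq_square matrix_vector_mult_scaleR algebra_simps)

lemma continuous_map_blk_quad:
  "continuous_map (product_topology (\<lambda>_. euclidean) {..<n}) euclideanreal (blk_quad n M)"
  unfolding blk_quad_def
proof (intro continuous_map_sum)
  fix j l assume "j \<in> {..<n}" "l \<in> {..<n}"
  then have "continuous_map (product_topology (\<lambda>_. euclidean) {..<n}) (prod_topology euclidean euclidean)
      (\<lambda>z::nat \<Rightarrow> real^3. (z j, z l))"
    by (intro continuous_intros) auto
  then have pair: "continuous_map (product_topology (\<lambda>_. euclidean) {..<n}) euclidean
      (\<lambda>z::nat \<Rightarrow> real^3. (z j, z l))"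
    by simp
  have "continuous_on UNIV (\<lambda>p::(real^3) \<times> (real^3). fst p \<bullet> (M j l *v snd p))"
    by (intro continuous_intros bounded_linear.continuous_on[OF bounded_linear_matrix_vector_mult])
  then have "continuous_map euclidean euclideanreal (\<lambda>p::(real^3) \<times> (real^3). fst p \<bullet> (M j l *v snd p))"
    by simp
  from continuous_map_compose[OF pair this]
  show "continuous_map (product_topology (\<lambda>_. euclidean) {..<n}) euclideanreal
      (\<lambda>z. z j \<bullet> (M j l *v z l))"
    by (simp add: o_def)
qed auto

definition blk_sqnorm :: "nat \<Rightarrow> (nat \<Rightarrow> real^3) \<Rightarrow> real"
  where "blk_sqnorm n z = (\<Sum>j<n. (norm (z j))\<^sup>2)"

lemma blk_sqnorm_nonneg: "0 \<le> blk_sqnorm n z"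
  by (simp add: blk_sqnorm_def sum_nonneg)

lemma norm_le_blk_sqnorm: "j < n \<Longrightarrow> (norm (z j))\<^sup>2 \<le> blk_sqnorm n z"
  unfolding blk_sqnorm_def by (rule member_le_sum) auto

lemma compactin_blk_unit_sphere:
  "compactin (product_topology (\<lambda>_. euclidean) {..<n}) {z \<in> PiE {..<n} (\<lambda>_. UNIV). blk_sqnorm n z = 1}"
  (is "compactin ?T ?S")
proof (rule closed_compactin)
  show "compactin ?T (PiE {..<n} (\<lambda>_. cball (0 :: real^3) 1))" by (simp add: compactin_PiE)
  have "norm (z j) \<le> 1" if "blk_sqnorm n z = 1" "j < n" for z :: "nat \<Rightarrow> real^3" and j
    using norm_le_blk_sqnorm[OF \<open>j < n\<close>, of z] that(1) by (simp add: power_le_one_iff)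
  then show "?S \<subseteq> PiE {..<n} (\<lambda>_. cball 0 1)"
  proof (intro subsetI)
    fix z assume "z \<in> ?S"
    then have "z \<in> extensional {..<n}" "blk_sqnorm n z = 1" by (simp_all add: PiE_iff)
    with \<open>\<And>z j. blk_sqnorm n z = 1 \<Longrightarrow> j < n \<Longrightarrow> norm (z j) \<le> 1\<close>
    show "z \<in> PiE {..<n} (\<lambda>_. cball 0 1)" by (simp add: PiE_iff)
  qed
  have "continuous_map ?T euclideanreal (blk_sqnorm n)"
    unfolding blk_sqnorm_def by (intro continuous_intros) auto
  from closedin_continuous_map_preimage[OF this, of "{1}"]
  show "closedin ?T ?S" by simp
qed

lemma blk_posdef_unit_sphere_bound:
  assumes "blk_posdef n M"
  obtains c where "c > 0"
    "\<And>z. z \<in> PiE {..<n} (\<lambda>_. UNIV) \<Longrightarrow> blk_sqnorm n z = 1 \<Longrightarrow> c \<le> blk_quad n M z"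
proof -
  define S where "S = {z \<in> PiE {..<n} (\<lambda>_. UNIV). blk_sqnorm n z = 1}"
  show thesis
  proof (cases "S = {}")
    case True
    then show thesis by (intro that[of 1]) (auto simp: S_def)
  next
    case False
    have "compact (blk_quad n M ` S)"
      using image_compactin[OF compactin_blk_unit_sphere continuous_map_blk_quad] by (simp add: S_def)
    then obtain w where "w \<in> S" and w_min: "\<And>z. z \<in> S \<Longrightarrow> blk_quad n M w \<le> blk_quad n M z"
      using compact_attains_inf[of "blk_quad n M ` S"] False by auto
    have "\<exists>j<n. w j \<noteq> 0"
    proof (rule ccontr)
      assume "\<not> (\<exists>j<n. w j \<noteq> 0)"
      then have "blk_sqnorm n w = 0" by (simp add: blk_sqnorm_def)
      with \<open>w \<in> S\<close> show False by (simp add: S_def)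
    qed
    with assms have "blk_quad n M w > 0" unfolding blk_posdef_def by blast
    with w_min show thesis by (intro that[of "blk_quad n M w"]) (auto simp: S_def)
  qed
qed

lemma blk_posdef_coercive:
  assumes "blk_posdef n M"
  obtains c where "c > 0" "\<And>z. c * blk_sqnorm n z \<le> blk_quad n M z"
proof -
  obtain c where "c > 0" and c:
    "\<And>z. z \<in> PiE {..<n} (\<lambda>_. UNIV) \<Longrightarrow> blk_sqnorm n z = 1 \<Longrightarrow> c \<le> blk_quad n M z"
    using blk_posdef_unit_sphere_bound[OF assms] by blast
  have "c * blk_sqnorm n z \<le> blk_quad n M z" for z
  proof (cases "blk_sqnorm n z = 0")
    case True
    then have "\<forall>j<n. z j = 0" unfolding blk_sqnorm_def by (simp add: sum_nonneg_eq_0_iff)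
    then show ?thesis using True by (simp add: blk_quad_def)
  next
    case False
    then have pos: "blk_sqnorm n z > 0" using blk_sqnorm_nonneg[of n z] by linarith
    define s where "s = sqrt (blk_sqnorm n z)"
    have "s > 0" "s\<^sup>2 = blk_sqnorm n z" using pos by (simp_all add: s_def)
    define y where "y = restrict (\<lambda>j. (1 / s) *\<^sub>R z j) {..<n}"
    have "blk_sqnorm n y = blk_sqnorm n z / s\<^sup>2"
      unfolding blk_sqnorm_def y_def using \<open>s > 0\<close> by (simp add: power_divide sum_divide_distrib)
    then have "c \<le> blk_quad n M y" using \<open>s\<^sup>2 = blk_sqnorm n z\<close> pos by (intro c) (auto simp: y_def)
    also have "blk_quad n M y = blk_quad n M (\<lambda>j. (1 / s) *\<^sub>R z j)"
      unfolding blk_quad_def y_def by simp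
    also have "\<dots> = blk_quad n M z / blk_sqnorm n z"
      using \<open>s\<^sup>2 = blk_sqnorm n z\<close> by (simp add: blk_quad_scaleR power_divide)
    finally show ?thesis using pos by (simp add: pos_le_divide_eq)
  qed
  with \<open>c > 0\<close> show thesis by (rule that)
qed

lemma blk_posdef_nonneg:
  assumes "blk_posdef n M"
  shows "0 \<le> blk_quad n M z"
proof -
  obtain c where "c > 0" "\<And>z. c * blk_sqnorm n z \<le> blk_quad n M z"
    using blk_posdef_coercive[OF assms] by blast
  then show ?thesis using blk_sqnorm_nonneg[of n z] by (meson mult_nonneg_nonneg less_imp_le order_trans)
qed

lemma norm_le_blk_quad:
  assumes "c > 0" "\<And>z. c * blk_sqnorm n z \<le> blk_quad n M z" "j < n"
  shows "(norm (z j))\<^sup>2 \<le> blk_quad n M z / c"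
proof -
  have "c * (norm (z j))\<^sup>2 \<le> c * blk_sqnorm n z"
    using norm_le_blk_sqnorm[OF \<open>j < n\<close>] \<open>c > 0\<close> by simp
  with assms(2)[of z] have "c * (norm (z j))\<^sup>2 \<le> blk_quad n M z" by linarith
  then show ?thesis using \<open>c > 0\<close> by (simp add: pos_le_divide_eq mult.commute)
qed

lemma has_vector_derivative_blk_quad:
  assumes "\<And>j. j < n \<Longrightarrow> (z j has_vector_derivative z' j) (at t within S)"
  shows "((\<lambda>t. blk_quad n M (\<lambda>j. z j t)) has_vector_derivative
           blk_form n M z' (\<lambda>j. z j t) + blk_form n M (\<lambda>j. z j t) z') (at t within S)"
proof -
  have "((\<lambda>t. z j t \<bullet> (M j l *v z l t)) has_vector_derivative
          z' j \<bullet> (M j l *v z l t) + z j t \<bullet> (M j l *v z' l)) (at t within S)"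
    if "j < n" "l < n" for j l
    using bounded_bilinear.has_vector_derivative[OF bounded_bilinear_inner assms[OF \<open>j < n\<close>]
        bounded_linear.has_vector_derivative[OF bounded_linear_matrix_vector_mult assms[OF \<open>l < n\<close>]]]
    by (simp add: add.commute)
  then show ?thesis
    unfolding blk_quad_def blk_form_def sum.distrib[symmetric]
    by (intro has_vector_derivative_sum) auto
qed

lemma has_vector_derivative_blk_mult_vec:
  assumes "\<And>p. p < n \<Longrightarrow> (z p has_vector_derivative z' p) F"
  shows "((\<lambda>t. blk_mult_vec n A (\<lambda>p. z p t) j) has_vector_derivative blk_mult_vec n A z' j) F"
  unfolding blk_mult_vec_def
  by (intro has_vector_derivative_sum bounded_linear.has_vector_derivative[OF
        bounded_linear_matrix_vector_mult] assms) auto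

lemma bounded_blk_form_comp:
  assumes "\<And>j. j < n \<Longrightarrow> bounded (w j ` S)" "\<And>j. j < n \<Longrightarrow> bounded (z j ` S)"
  shows "bounded ((\<lambda>x. blk_form n M (\<lambda>j. w j x) (\<lambda>j. z j x)) ` S)"
  unfolding blk_form_def
  by (intro bounded_sum_comp bounded_bilinear.bounded_comp[OF bounded_bilinear_inner]
      bounded_linear.bounded_comp[OF bounded_linear_matrix_vector_mult] assms) auto

lemma bounded_blk_mult_vec_comp:
  assumes "\<And>p. p < n \<Longrightarrow> bounded (z p ` S)"
  shows "bounded ((\<lambda>x. blk_mult_vec n A (\<lambda>p. z p x) j) ` S)"
  unfolding blk_mult_vec_def
  by (intro bounded_sum_comp bounded_linear.bounded_comp[OF bounded_linear_matrix_vector_mult] assms) auto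

lemma tendsto_blk_mult_vec_zero:
  assumes "\<And>p. p < n \<Longrightarrow> (z p \<longlongrightarrow> 0) F"
  shows "((\<lambda>x. blk_mult_vec n A (\<lambda>p. z p x) j) \<longlongrightarrow> 0) F"
  unfolding blk_mult_vec_def
  by (intro tendsto_null_sum bounded_linear.tendsto_zero[OF bounded_linear_matrix_vector_mult] assms) auto

lemma Ad_mult_vec: "Ad n g j p *v x = companion n g j p *\<^sub>R x"
  by (simp add: Ad_def scaleR_matrix_vector_assoc[symmetric])

lemma Bd_mult_vec: "Bd n g j *v x = (if j = n - 1 then g n *\<^sub>R x else 0)"
  by (simp add: Bd_def scaleR_matrix_vector_assoc[symmetric])

lemma blk_companion_row_shift:
  assumes "j + 1 < n"
  shows "blk_mult_vec n (Ad n g) z j + Bd n g j *v v = z (j + 1)"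
proof -
  have "blk_mult_vec n (Ad n g) z j = (\<Sum>p<n. if p = j + 1 then z p else 0)"
    unfolding blk_mult_vec_def Ad_mult_vec using assms by (intro sum.cong) (auto simp: companion_def)
  then show ?thesis using assms by (simp add: Bd_mult_vec)
qed

lemma blk_companion_last_row:
  assumes "n \<ge> 1"
  shows "blk_mult_vec n (Ad n g) z (n - 1) + Bd n g (n - 1) *v v
       = - (g n *\<^sub>R z 0 + (\<Sum>k=1..n-1. g k *\<^sub>R z (n - k))) + g n *\<^sub>R v"
proof -
  have "{..<n} = insert 0 {1..<n}" using assms by auto
  then have "(\<Sum>p<n. g (n - p) *\<^sub>R z p) = g n *\<^sub>R z 0 + (\<Sum>p=1..<n. g (n - p) *\<^sub>R z p)"
    by simp
  also have "(\<Sum>p=1..<n. g (n - p) *\<^sub>R z p) = (\<Sum>k=1..n-1. g k *\<^sub>R z (n - k))"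
    by (rule sum.reindex_bij_witness[of _ "\<lambda>k. n - k" "\<lambda>p. n - p"]) auto
  finally have "(\<Sum>p<n. g (n - p) *\<^sub>R z p) = g n *\<^sub>R z 0 + (\<Sum>k=1..n-1. g k *\<^sub>R z (n - k))" .
  moreover have "blk_mult_vec n (Ad n g) z (n - 1) = - (\<Sum>p<n. g (n - p) *\<^sub>R z p)"
    unfolding blk_mult_vec_def Ad_mult_vec using assms by (simp add: companion_def sum_negf)
  ultimately show ?thesis by (simp add: Bd_mult_vec)
qed

lemma hurwitz_coeffs_last_nonzero:
  assumes "hurwitz_coeffs n g" "n \<ge> 1"
  shows "g n \<noteq> 0"
proof
  assume "g n = 0"
  have "(\<Sum>k=1..n. complex_of_real (g k) * 0 ^ (n - k)) = (\<Sum>k=1..n. if k = n then complex_of_real (g n) else 0)"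
    by (intro sum.cong) auto
  then have "(0::complex) ^ n + (\<Sum>k=1..n. complex_of_real (g k) * 0 ^ (n - k)) = 0"
    using \<open>g n = 0\<close> \<open>n \<ge> 1\<close> by simp
  then show False using assms(1) unfolding hurwitz_coeffs_def by fastforce
qed

section \<open>Diagonal gain matrices\<close>

definition diag_inverse :: "real^'n^'n \<Rightarrow> real^'n^'n"
  where "diag_inverse G = (\<chi> a b. if a = b then inverse (G $ a $ a) else 0)"

lemma diag_inverse_mult_vec_nth: "(diag_inverse G *v x) $ a = x $ a / G $ a $ a"
proof -
  have "(diag_inverse G *v x) $ a = (\<Sum>b\<in>UNIV. if b = a then x $ a / G $ a $ a else 0)"
    unfolding diag_inverse_def matrix_vector_mult_def vec_lambda_beta
    by (intro sum.cong) (auto simp: divide_inverse)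
  then show ?thesis by simp
qed

lemma inner_diag_inverse_commute: "x \<bullet> (diag_inverse G *v y) = y \<bullet> (diag_inverse G *v x)"
  by (simp add: inner_vec_def diag_inverse_mult_vec_nth mult.commute)

lemma inner_diag_inverse_self:
  "x \<bullet> (diag_inverse G *v x) = (\<Sum>a\<in>UNIV. (x $ a)\<^sup>2 / G $ a $ a)"
  by (simp add: inner_vec_def diag_inverse_mult_vec_nth power2_eq_square)

lemma inner_diag_posdef_diag_inverse:
  assumes "diag_posdef G"
  shows "(G *v x) \<bullet> (diag_inverse G *v y) = x \<bullet> y"
proof -
  have "(G *v x) $ a = (\<Sum>b\<in>UNIV. if b = a then G $ a $ a * x $ a else 0)" for a
    using assms unfolding diag_posdef_def matrix_vector_mult_def vec_lambda_beta
    by (intro sum.cong) auto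
  then have "(G *v x) $ a = G $ a $ a * x $ a" for a by simp
  then show ?thesis
    using assms unfolding diag_posdef_def
    by (simp add: inner_vec_def diag_inverse_mult_vec_nth less_imp_neq[symmetric])
qed

lemma diag_inverse_quadratic_nonneg: "diag_posdef G \<Longrightarrow> 0 \<le> x \<bullet> (diag_inverse G *v x)"
  unfolding inner_diag_inverse_self diag_posdef_def by (intro sum_nonneg) (simp add: less_imp_le)

lemma norm_le_trace_diag_inverse:
  assumes "diag_posdef G"
  shows "(norm x)\<^sup>2 \<le> trace G * (x \<bullet> (diag_inverse G *v x))"
proof -
  have pos: "G $ a $ a > 0" for a using assms by (simp add: diag_posdef_def)
  have "(norm x)\<^sup>2 = (\<Sum>a\<in>UNIV. G $ a $ a * ((x $ a)\<^sup>2 / G $ a $ a))"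
    using pos by (simp add: norm_vec_def L2_set_def sum_nonneg less_imp_neq[symmetric])
  also have "\<dots> \<le> (\<Sum>a\<in>UNIV. trace G * ((x $ a)\<^sup>2 / G $ a $ a))"
  proof (intro sum_mono mult_right_mono)
    show "G $ a $ a \<le> trace G" for a
      unfolding trace_def by (rule member_le_sum) (use pos in \<open>auto simp: less_imp_le\<close>)
  qed (use pos in \<open>simp add: less_imp_le\<close>)
  also have "\<dots> = trace G * (x \<bullet> (diag_inverse G *v x))"
    by (simp add: inner_diag_inverse_self sum_distrib_left)
  finally show ?thesis .
qed

section \<open>The error dynamics of the direct filter\<close>

text \<open>\<open>X i j\<close> is the \<open>j\<close>-th derivative of the filter state \<open>x\<^sub>i\<close>, so
  \<open>z\<^sub>i = (X i 0, \<dots>, X i (n - 1))\<close>; the measurements are indexed by a finite set \<open>I\<close>,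
  which is \<open>{1..m}\<close> in the theorem.\<close>

locale direct_filter =
  fixes n :: nat and I :: "nat set"
    and \<gamma> :: "nat \<Rightarrow> nat \<Rightarrow> real"
    and Q P :: "nat \<Rightarrow> nat \<Rightarrow> nat \<Rightarrow> real^3^3"
    and \<Gamma> :: "real^3^3"
    and R :: "real \<Rightarrow> real^3^3"
    and \<omega> \<omega>m :: "real \<Rightarrow> real^3"
    and \<eta> :: "real^3"
    and r :: "nat \<Rightarrow> real^3"
    and b bh :: "nat \<Rightarrow> real \<Rightarrow> real^3"
    and \<eta>h :: "real \<Rightarrow> real^3"
    and X :: "nat \<Rightarrow> nat \<Rightarrow> real \<Rightarrow> real^3"
  assumes n_pos: "n \<ge> 1"
    and finite_I: "finite I"
    and gain_nonzero: "i \<in> I \<Longrightarrow> \<gamma> i n \<noteq> 0"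
    and Q_posdef: "i \<in> I \<Longrightarrow> blk_posdef n (Q i)"
    and P_symmetric: "i \<in> I \<Longrightarrow> blk_symmetric n (P i)"
    and P_posdef: "i \<in> I \<Longrightarrow> blk_posdef n (P i)"
    and lyapunov_P: "i \<in> I \<Longrightarrow> lyapunov_eq n (Ad n (\<gamma> i)) (P i) (Q i)"
    and Gamma_posdef: "diag_posdef \<Gamma>"
    and rotation: "t \<ge> 0 \<Longrightarrow> rotation_matrix (R t)"
    and attitude: "t \<ge> 0 \<Longrightarrow> (R has_vector_derivative (R t ** skew (\<omega> t))) (at t within {0..})"
    and meas: "i \<in> I \<Longrightarrow> t \<ge> 0 \<Longrightarrow> b i t = transpose (R t) *v r i"
    and gyro: "t \<ge> 0 \<Longrightarrow> \<omega>m t = \<omega> t + \<eta>"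
    and gyro_bounded: "bounded (\<omega>m ` {0..})"
    and noncollinear: "\<exists>i\<in>I. \<exists>j\<in>I. \<forall>t\<ge>0. \<not> collinear {0, b i t, b j t}"
    and filt_x: "i \<in> I \<Longrightarrow> j + 1 < n \<Longrightarrow> t \<ge> 0 \<Longrightarrow>
                   (X i j has_vector_derivative X i (j + 1) t) (at t within {0..})"
    and filt_xn: "i \<in> I \<Longrightarrow> t \<ge> 0 \<Longrightarrow> X i (n - 1) t =
                   - (\<Sum>k=1..n-1. \<gamma> i k *\<^sub>R X i (n - k - 1) t) + \<gamma> i n *\<^sub>R (b i t - bh i t)"
    and filt_b: "i \<in> I \<Longrightarrow> t \<ge> 0 \<Longrightarrow> (bh i has_vector_derivative
                   (- (skew (\<omega>m t - \<eta>h t) *v b i t) + X i 0 t)) (at t within {0..})"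
    and filt_eta: "t \<ge> 0 \<Longrightarrow> (\<eta>h has_vector_derivative
                   (\<Gamma> *v (\<Sum>i\<in>I. skew (b i t) *v upsilon n (\<gamma> i) (P i) (\<lambda>j. X i j t))))
                   (at t within {0..})"
begin

definition coupling :: "nat \<Rightarrow> real \<Rightarrow> real^3"
  where "coupling i t = (\<eta> - \<eta>h t) \<times> b i t"

text \<open>The filter states obey \<open>z\<^sub>i' = A\<^sub>d\<^sub>i z\<^sub>i + B\<^sub>d\<^sub>i ((\<eta> - \<eta>h) \<times> b\<^sub>i)\<close>.\<close>

definition z_dot :: "nat \<Rightarrow> nat \<Rightarrow> real \<Rightarrow> real^3"
  where "z_dot i j t = blk_mult_vec n (Ad n (\<gamma> i)) (\<lambda>p. X i p t) j + Bd n (\<gamma> i) j *v coupling i t"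

definition ups :: "nat \<Rightarrow> real \<Rightarrow> real^3"
  where "ups i t = upsilon n (\<gamma> i) (P i) (\<lambda>j. X i j t)"

definition bias_rate :: "real \<Rightarrow> real^3"
  where "bias_rate t = (\<Sum>i\<in>I. skew (b i t) *v ups i t)"

definition lyapunov :: "real \<Rightarrow> real"
  where "lyapunov t = (\<Sum>i\<in>I. blk_quad n (P i) (\<lambda>j. X i j t))
                      + (\<eta> - \<eta>h t) \<bullet> (diag_inverse \<Gamma> *v (\<eta> - \<eta>h t))"

definition dissipation :: "real \<Rightarrow> real"
  where "dissipation t = (\<Sum>i\<in>I. blk_quad n (Q i) (\<lambda>j. X i j t))"

lemma b_has_derivative:
  assumes "i \<in> I" "t \<ge> 0"
  shows "(b i has_vector_derivative - (\<omega> t \<times> b i t)) (at t within {0..})"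
proof (rule has_vector_derivative_transform)
  show "((\<lambda>t. transpose (R t) *v r i) has_vector_derivative - (\<omega> t \<times> b i t)) (at t within {0..})"
  proof -
    have "((\<lambda>t. r i v* R t) has_vector_derivative r i v* (R t ** skew (\<omega> t))) (at t within {0..})"
      by (rule bounded_linear.has_vector_derivative[OF bounded_linear_vector_matrix_mult
            attitude[OF \<open>t \<ge> 0\<close>]])
    moreover have "r i v* (R t ** skew (\<omega> t)) = - (\<omega> t \<times> b i t)"
      using meas[OF assms] cross_skew[of "b i t" "\<omega> t"]
      by (simp add: vector_matrix_mul_assoc[symmetric] vector_mult_skew)
    ultimately show ?thesis by simp
  qed
qed (use assms meas in auto)

lemma b_error_has_derivative:
  assumes "i \<in> I" "t \<ge> 0"
  shows "((\<lambda>t. b i t - bh i t) has_vector_derivative coupling i t - X i 0 t) (at t within {0..})"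
proof -
  have "\<omega>m t - \<eta>h t = \<omega> t + (\<eta> - \<eta>h t)" using gyro[OF \<open>t \<ge> 0\<close>] by simp
  then have "(\<omega>m t - \<eta>h t) \<times> b i t = \<omega> t \<times> b i t + coupling i t"
    unfolding coupling_def by (simp only: cross_add_left)
  then show ?thesis
    using has_vector_derivative_diff[OF b_has_derivative[OF assms] filt_b[OF assms]] by simp
qed

lemma X_has_derivative:
  assumes "i \<in> I" "j < n" "t \<ge> 0"
  shows "(X i j has_vector_derivative z_dot i j t) (at t within {0..})"
proof (cases "j + 1 < n")
  case True
  then show ?thesis
    using filt_x[OF assms(1) True assms(3)] by (simp add: z_dot_def blk_companion_row_shift)
next
  case False
  with assms(2) have j: "j = n - 1" by simp
  define F where "F t = - (\<Sum>k=1..n-1. \<gamma> i k *\<^sub>R X i (n - k - 1) t) + \<gamma> i n *\<^sub>R (b i t - bh i t)" for t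
  have "(X i (n - k - 1) has_vector_derivative X i (n - k) t) (at t within {0..})"
    if "k \<in> {1..n-1}" for k
  proof -
    have "n - k - 1 + 1 = n - k" "n - k - 1 + 1 < n" using that by auto
    then show ?thesis using filt_x[OF assms(1) _ assms(3), of "n - k - 1"] by simp
  qed
  then have "((\<lambda>t. \<Sum>k=1..n-1. \<gamma> i k *\<^sub>R X i (n - k - 1) t) has_vector_derivative
      (\<Sum>k=1..n-1. \<gamma> i k *\<^sub>R X i (n - k) t)) (at t within {0..})"
    by (intro has_vector_derivative_sum bounded_linear.has_vector_derivative[OF bounded_linear_scaleR_right])
  from has_vector_derivative_add[OF has_vector_derivative_minus[OF this]
      bounded_linear.has_vector_derivative[OF bounded_linear_scaleR_right b_error_has_derivative[OF assms(1,3)]]]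
  have "(F has_vector_derivative - (\<Sum>k=1..n-1. \<gamma> i k *\<^sub>R X i (n - k) t)
      + \<gamma> i n *\<^sub>R (coupling i t - X i 0 t)) (at t within {0..})"
    unfolding F_def .
  moreover have "- (\<Sum>k=1..n-1. \<gamma> i k *\<^sub>R X i (n - k) t) + \<gamma> i n *\<^sub>R (coupling i t - X i 0 t)
      = z_dot i j t"
    unfolding j z_dot_def blk_companion_last_row[OF n_pos] scaleR_diff_right by simp
  moreover have "X i j s = F s" if "s \<in> {0..}" for s
    using filt_xn[OF assms(1)] that by (simp add: F_def j)
  ultimately show ?thesis
    using assms(3) by (auto intro: has_vector_derivative_transform[of t "{0..}" "X i j" F])
qed

lemma bias_error_has_derivative:
  assumes "t \<ge> 0"
  shows "((\<lambda>t. \<eta> - \<eta>h t) has_vector_derivative - (\<Gamma> *v bias_rate t)) (at t within {0..})"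
  using has_vector_derivative_diff[OF has_vector_derivative_const filt_eta[OF assms]]
  by (simp add: bias_rate_def ups_def)

lemma coupling_has_derivative:
  assumes "i \<in> I" "t \<ge> 0"
  shows "(coupling i has_vector_derivative
           (\<eta> - \<eta>h t) \<times> (- (\<omega> t \<times> b i t)) + (- (\<Gamma> *v bias_rate t)) \<times> b i t)
           (at t within {0..})"
  unfolding coupling_def
  by (rule bounded_bilinear.has_vector_derivative[OF bounded_bilinear_cross
        bias_error_has_derivative[OF assms(2)] b_has_derivative[OF assms]])

lemma P_quadratic_has_derivative:
  assumes "i \<in> I" "t \<ge> 0"
  shows "((\<lambda>t. blk_quad n (P i) (\<lambda>j. X i j t)) has_vector_derivative
           - blk_quad n (Q i) (\<lambda>j. X i j t) + 2 * (coupling i t \<bullet> ups i t)) (at t within {0..})"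
proof -
  have "((\<lambda>t. blk_quad n (P i) (\<lambda>j. X i j t)) has_vector_derivative
      blk_form n (P i) (\<lambda>j. z_dot i j t) (\<lambda>j. X i j t) + blk_form n (P i) (\<lambda>j. X i j t) (\<lambda>j. z_dot i j t))
      (at t within {0..})"
    by (rule has_vector_derivative_blk_quad) (rule X_has_derivative[OF assms(1) _ assms(2)])
  moreover have "blk_form n (P i) (\<lambda>j. z_dot i j t) (\<lambda>j. X i j t) + blk_form n (P i) (\<lambda>j. X i j t) (\<lambda>j. z_dot i j t)
      = - blk_quad n (Q i) (\<lambda>j. X i j t) + 2 * (coupling i t \<bullet> ups i t)"
    using lyapunov_eq_blk_form[OF P_symmetric[OF assms(1)] lyapunov_P[OF assms(1)],
        of "\<lambda>j. X i j t" "\<lambda>j. Bd n (\<gamma> i) j *v coupling i t"]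
    unfolding z_dot_def blk_form_Bd_upsilon ups_def .
  ultimately show ?thesis by simp
qed

lemma bias_quadratic_has_derivative:
  assumes "t \<ge> 0"
  shows "((\<lambda>t. (\<eta> - \<eta>h t) \<bullet> (diag_inverse \<Gamma> *v (\<eta> - \<eta>h t))) has_vector_derivative
           - 2 * (bias_rate t \<bullet> (\<eta> - \<eta>h t))) (at t within {0..})"
proof -
  let ?e = "\<eta> - \<eta>h t" and ?e' = "- (\<Gamma> *v bias_rate t)" and ?D = "diag_inverse \<Gamma>"
  have "?e' \<bullet> (?D *v ?e) = - (bias_rate t \<bullet> ?e)"
    by (simp only: inner_minus_left inner_diag_posdef_diag_inverse[OF Gamma_posdef])
  then have "?e \<bullet> (?D *v ?e') + ?e' \<bullet> (?D *v ?e) = - 2 * (bias_rate t \<bullet> ?e)"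
    unfolding inner_diag_inverse_commute[of ?e] by simp
  moreover have "((\<lambda>t. (\<eta> - \<eta>h t) \<bullet> (?D *v (\<eta> - \<eta>h t))) has_vector_derivative
      ?e \<bullet> (?D *v ?e') + ?e' \<bullet> (?D *v ?e)) (at t within {0..})"
    by (rule bounded_bilinear.has_vector_derivative[OF bounded_bilinear_inner
        bias_error_has_derivative[OF assms] bounded_linear.has_vector_derivative[OF
        bounded_linear_matrix_vector_mult bias_error_has_derivative[OF assms]]])
  ultimately show ?thesis by simp
qed

text \<open>The bias update is designed so that this term cancels the coupling terms of the
  derivatives of the quadratic forms of the filter states.\<close>

lemma bias_rate_inner_bias_error: "bias_rate t \<bullet> (\<eta> - \<eta>h t) = (\<Sum>i\<in>I. coupling i t \<bullet> ups i t)"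
  unfolding bias_rate_def coupling_def inner_sum_left
  by (intro sum.cong refl) (simp add: cross_triple[of "\<eta> - \<eta>h t"])

lemma lyapunov_has_derivative:
  assumes "t \<ge> 0"
  shows "(lyapunov has_real_derivative - dissipation t) (at t within {0..})"
proof -
  have "(lyapunov has_vector_derivative
      (\<Sum>i\<in>I. - blk_quad n (Q i) (\<lambda>j. X i j t) + 2 * (coupling i t \<bullet> ups i t))
      + - 2 * (bias_rate t \<bullet> (\<eta> - \<eta>h t))) (at t within {0..})"
    unfolding lyapunov_def
    by (rule has_vector_derivative_add[OF has_vector_derivative_sum bias_quadratic_has_derivative[OF assms]])
      (rule P_quadratic_has_derivative[OF _ assms])
  also have "(\<Sum>i\<in>I. - blk_quad n (Q i) (\<lambda>j. X i j t) + 2 * (coupling i t \<bullet> ups i t))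
      + - 2 * (bias_rate t \<bullet> (\<eta> - \<eta>h t)) = - dissipation t"
    unfolding bias_rate_inner_bias_error dissipation_def sum.distrib sum_negf sum_distrib_left[symmetric]
    by simp
  finally show ?thesis unfolding has_real_derivative_iff_has_vector_derivative .
qed

lemma dissipation_nonneg: "0 \<le> dissipation t"
  unfolding dissipation_def by (intro sum_nonneg blk_posdef_nonneg Q_posdef)

lemma lyapunov_le_initial:
  assumes "t \<ge> 0"
  shows "lyapunov t \<le> lyapunov 0"
  using nonincreasing_of_nonpos_derivative[OF lyapunov_has_derivative _ order_refl assms]
    dissipation_nonneg by simp

lemma sum_blk_quad_P_nonneg: "0 \<le> (\<Sum>i\<in>I. blk_quad n (P i) (\<lambda>j. X i j t))"
  by (rule sum_nonneg) (rule blk_posdef_nonneg[OF P_posdef])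

lemma lyapunov_nonneg: "0 \<le> lyapunov t"
  unfolding lyapunov_def
  by (intro add_nonneg_nonneg sum_blk_quad_P_nonneg diag_inverse_quadratic_nonneg Gamma_posdef)

lemma bias_error_quadratic_le_lyapunov:
  "(\<eta> - \<eta>h t) \<bullet> (diag_inverse \<Gamma> *v (\<eta> - \<eta>h t)) \<le> lyapunov t"
  using sum_blk_quad_P_nonneg[of t] unfolding lyapunov_def by linarith

lemma blk_quad_P_le_lyapunov:
  assumes "i \<in> I"
  shows "blk_quad n (P i) (\<lambda>j. X i j t) \<le> lyapunov t"
proof -
  have "blk_quad n (P i) (\<lambda>j. X i j t) \<le> (\<Sum>i\<in>I. blk_quad n (P i) (\<lambda>j. X i j t))"
    by (rule member_le_sum[OF assms _ finite_I]) (simp add: blk_posdef_nonneg P_posdef)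
  moreover have "0 \<le> (\<eta> - \<eta>h t) \<bullet> (diag_inverse \<Gamma> *v (\<eta> - \<eta>h t))"
    by (rule diag_inverse_quadratic_nonneg[OF Gamma_posdef])
  ultimately show ?thesis unfolding lyapunov_def by linarith
qed

lemma bounded_X:
  assumes "i \<in> I" "j < n"
  shows "bounded (X i j ` {0..})"
proof -
  obtain c where c: "c > 0" "\<And>z. c * blk_sqnorm n z \<le> blk_quad n (P i) z"
    using blk_posdef_coercive[OF P_posdef[OF assms(1)]] by blast
  have "(norm (X i j t))\<^sup>2 \<le> lyapunov 0 / c" if "t \<ge> 0" for t
  proof -
    have "(norm (X i j t))\<^sup>2 \<le> blk_quad n (P i) (\<lambda>j. X i j t) / c"
      by (rule norm_le_blk_quad[OF c assms(2)])
    also have "\<dots> \<le> lyapunov 0 / c"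
      using blk_quad_P_le_lyapunov[OF assms(1), of t] lyapunov_le_initial[OF that] c(1)
      by (intro divide_right_mono) auto
    finally show ?thesis .
  qed
  then show ?thesis by (intro boundedI[of _ "sqrt (lyapunov 0 / c)"]) (auto intro: real_le_rsqrt)
qed

lemma bounded_bias_error: "bounded ((\<lambda>t. \<eta> - \<eta>h t) ` {0..})"
proof -
  have "(norm (\<eta> - \<eta>h t))\<^sup>2 \<le> trace \<Gamma> * lyapunov 0" if "t \<ge> 0" for t
  proof -
    have "trace \<Gamma> \<ge> 0"
      using Gamma_posdef unfolding trace_def diag_posdef_def by (simp add: sum_nonneg less_imp_le)
    have "(norm (\<eta> - \<eta>h t))\<^sup>2 \<le> trace \<Gamma> * ((\<eta> - \<eta>h t) \<bullet> (diag_inverse \<Gamma> *v (\<eta> - \<eta>h t)))"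
      by (rule norm_le_trace_diag_inverse[OF Gamma_posdef])
    also have "\<dots> \<le> trace \<Gamma> * lyapunov 0"
      using bias_error_quadratic_le_lyapunov[of t] lyapunov_le_initial[OF that] \<open>trace \<Gamma> \<ge> 0\<close>
      by (intro mult_left_mono) auto
    finally show ?thesis .
  qed
  then show ?thesis by (intro boundedI[of _ "sqrt (trace \<Gamma> * lyapunov 0)"]) (auto intro: real_le_rsqrt)
qed

lemma bounded_b:
  assumes "i \<in> I"
  shows "bounded (b i ` {0..})"
proof -
  have "norm (b i t) = norm (r i)" if "t \<ge> 0" for t
  proof -
    have "orthogonal_matrix (transpose (R t))" using rotation[OF that] by (simp add: rotation_matrix_def)
    then show ?thesis unfolding meas[OF assms that] by (rule norm_orthogonal_matrix_mult_vec)
  qed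
  then show ?thesis by (intro boundedI[of _ "norm (r i)"]) auto
qed

lemma bounded_omega: "bounded (\<omega> ` {0..})"
proof -
  have "\<omega> ` {0..} = (\<lambda>t. \<omega>m t - \<eta>) ` {0..}" using gyro by (intro image_cong) auto
  then show ?thesis using bounded_minus_comp[OF gyro_bounded bounded_const_comp] by simp
qed

lemma bounded_coupling: "i \<in> I \<Longrightarrow> bounded (coupling i ` {0..})"
  unfolding coupling_def
  by (rule bounded_bilinear.bounded_comp[OF bounded_bilinear_cross bounded_bias_error bounded_b])

lemma bounded_z_dot: "i \<in> I \<Longrightarrow> bounded (z_dot i j ` {0..})"
  unfolding z_dot_def
  by (intro bounded_plus_comp bounded_blk_mult_vec_comp bounded_X
      bounded_linear.bounded_comp[OF bounded_linear_matrix_vector_mult] bounded_coupling)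

lemma bounded_bias_rate: "bounded (bias_rate ` {0..})"
  unfolding bias_rate_def ups_def upsilon_def skew_mult_vec
  by (intro bounded_sum_comp bounded_bilinear.bounded_comp[OF bounded_bilinear_cross] bounded_b
      bounded_linear.bounded_comp[OF bounded_linear_matrix_vector_mult] bounded_X) auto

lemma dissipation_tendsto_zero: "(dissipation \<longlongrightarrow> 0) at_top"
proof -
  define D' where "D' t = (\<Sum>i\<in>I. blk_form n (Q i) (\<lambda>j. z_dot i j t) (\<lambda>j. X i j t)
                                + blk_form n (Q i) (\<lambda>j. X i j t) (\<lambda>j. z_dot i j t))" for t
  have "(dissipation has_vector_derivative D' t) (at t within {0..})" if "t \<ge> 0" for t
    unfolding dissipation_def D'_def
    by (intro has_vector_derivative_sum has_vector_derivative_blk_quad X_has_derivative that)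
  moreover have "bounded (D' ` {0..})"
    unfolding D'_def
    by (intro bounded_sum_comp bounded_plus_comp bounded_blk_form_comp bounded_X bounded_z_dot) auto
  ultimately have "uniformly_continuous_on {0..} (\<lambda>t. - dissipation t)"
    by (intro uniformly_continuous_on_bounded_vector_derivative[where g'="\<lambda>t. - D' t"]
        has_vector_derivative_minus) auto
  moreover have "(lyapunov \<longlongrightarrow> (INF t\<in>{0..}. lyapunov t)) at_top"
    using nonincreasing_of_nonpos_derivative[OF lyapunov_has_derivative] dissipation_nonneg
    by (intro nonincreasing_tendsto_INF[where B=0]) (auto simp: lyapunov_nonneg)
  ultimately have "((\<lambda>t. - dissipation t) \<longlongrightarrow> 0) at_top"
    using lyapunov_has_derivative
    by (intro barbalat[where y=lyapunov]) (auto simp: has_real_derivative_iff_has_vector_derivative)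
  then show ?thesis using tendsto_minus_cancel_left[of dissipation 0] by simp
qed

lemma X_tendsto_zero:
  assumes "i \<in> I" "j < n"
  shows "(X i j \<longlongrightarrow> 0) at_top"
proof -
  obtain c where c: "c > 0" "\<And>z. c * blk_sqnorm n z \<le> blk_quad n (Q i) z"
    using blk_posdef_coercive[OF Q_posdef[OF assms(1)]] by blast
  have "blk_quad n (Q i) (\<lambda>j. X i j t) \<le> dissipation t" for t
    unfolding dissipation_def
    by (rule member_le_sum[OF assms(1) _ finite_I]) (simp add: blk_posdef_nonneg Q_posdef)
  then have bound: "(norm (X i j t))\<^sup>2 \<le> dissipation t / c" for t
    using norm_le_blk_quad[OF c assms(2), of "\<lambda>j. X i j t"] c(1)
    by (meson divide_right_mono less_imp_le order_trans)
  show ?thesis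
  proof (rule Lim_null_comparison)
    show "eventually (\<lambda>t. norm (X i j t) \<le> sqrt (dissipation t / c)) at_top"
      by (intro always_eventually allI real_le_rsqrt bound)
    show "((\<lambda>t. sqrt (dissipation t / c)) \<longlongrightarrow> 0) at_top"
      using tendsto_real_sqrt[OF tendsto_divide_zero[OF dissipation_tendsto_zero, of c]] by simp
  qed
qed

lemma b_error_tendsto_zero:
  assumes "i \<in> I"
  shows "((\<lambda>t. b i t - bh i t) \<longlongrightarrow> 0) at_top"
proof -
  have error_eq: "(1 / \<gamma> i n) *\<^sub>R (X i (n - 1) t + (\<Sum>k=1..n-1. \<gamma> i k *\<^sub>R X i (n - k - 1) t))
      = b i t - bh i t" if "t \<ge> 0" for t
    using filt_xn[OF assms that] gain_nonzero[OF assms] by simp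
  have "((\<lambda>t. (1 / \<gamma> i n) *\<^sub>R (X i (n - 1) t + (\<Sum>k=1..n-1. \<gamma> i k *\<^sub>R X i (n - k - 1) t)))
      \<longlongrightarrow> 0) at_top"
  proof -
    have sum_lim: "((\<lambda>t. \<Sum>k=1..n-1. \<gamma> i k *\<^sub>R X i (n - k - 1) t) \<longlongrightarrow> 0) at_top"
      using tendsto_scaleR[OF tendsto_const X_tendsto_zero[OF assms]] n_pos
      by (intro tendsto_null_sum) auto
    show ?thesis
      using tendsto_scaleR[OF tendsto_const tendsto_add[OF X_tendsto_zero[OF assms] sum_lim]] n_pos
      by simp
  qed
  then show ?thesis
    by (rule Lim_transform_eventually) (rule eventually_mono[OF eventually_ge_at_top error_eq])
qed

lemma z_dot_last_tendsto_zero: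
  assumes "i \<in> I"
  shows "(z_dot i (n - 1) \<longlongrightarrow> 0) at_top"
proof -
  have last: "n - 1 < n" using n_pos by simp
  define c' where "c' t = (\<eta> - \<eta>h t) \<times> (- (\<omega> t \<times> b i t)) + (- (\<Gamma> *v bias_rate t)) \<times> b i t" for t
  have "(z_dot i (n - 1) has_vector_derivative
      blk_mult_vec n (Ad n (\<gamma> i)) (\<lambda>p. z_dot i p t) (n - 1) + Bd n (\<gamma> i) (n - 1) *v c' t)
      (at t within {0..})" if "t \<ge> 0" for t
    unfolding z_dot_def[abs_def] c'_def
    by (intro has_vector_derivative_add has_vector_derivative_blk_mult_vec
        X_has_derivative[OF assms _ that, unfolded z_dot_def]
        bounded_linear.has_vector_derivative[OF bounded_linear_matrix_vector_mult]
        coupling_has_derivative[OF assms that])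
  moreover have "bounded ((\<lambda>t. blk_mult_vec n (Ad n (\<gamma> i)) (\<lambda>p. z_dot i p t) (n - 1)
      + Bd n (\<gamma> i) (n - 1) *v c' t) ` {0..})"
    unfolding c'_def
    by (intro bounded_plus_comp bounded_blk_mult_vec_comp bounded_z_dot[OF assms]
        bounded_linear.bounded_comp[OF bounded_linear_matrix_vector_mult]
        bounded_bilinear.bounded_comp[OF bounded_bilinear_cross] bounded_bias_error bounded_b[OF assms]
        bounded_omega bounded_bias_rate uminus_bounded_comp[THEN iffD2])
  ultimately have "uniformly_continuous_on {0..} (z_dot i (n - 1))"
    by (rule uniformly_continuous_on_bounded_vector_derivative)
  then show ?thesis
    using X_has_derivative[OF assms last] by (intro barbalat[OF X_tendsto_zero[OF assms last]]) auto
qed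

lemma coupling_tendsto_zero:
  assumes "i \<in> I"
  shows "(coupling i \<longlongrightarrow> 0) at_top"
proof -
  have "((\<lambda>t. blk_mult_vec n (Ad n (\<gamma> i)) (\<lambda>p. X i p t) (n - 1)) \<longlongrightarrow> 0) at_top"
    by (rule tendsto_blk_mult_vec_zero) (rule X_tendsto_zero[OF assms])
  then have "((\<lambda>t. (1 / \<gamma> i n) *\<^sub>R (z_dot i (n - 1) t - blk_mult_vec n (Ad n (\<gamma> i)) (\<lambda>p. X i p t) (n - 1)))
      \<longlongrightarrow> 0) at_top"
    using tendsto_scaleR[OF tendsto_const tendsto_diff[OF z_dot_last_tendsto_zero[OF assms]]] by fastforce
  moreover have "(1 / \<gamma> i n) *\<^sub>R (z_dot i (n - 1) t - blk_mult_vec n (Ad n (\<gamma> i)) (\<lambda>p. X i p t) (n - 1))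
      = coupling i t" for t
    using gain_nonzero[OF assms] by (simp add: z_dot_def Bd_mult_vec)
  ultimately show ?thesis by simp
qed

lemma bias_error_tendsto_zero: "((\<lambda>t. \<eta> - \<eta>h t) \<longlongrightarrow> 0) at_top"
proof -
  obtain i j where ij: "i \<in> I" "j \<in> I" and nc: "\<And>t. t \<ge> 0 \<Longrightarrow> \<not> collinear {0, b i t, b j t}"
    using noncollinear by blast
  have "\<not> collinear {0, r i, r j}"
    using collinear_matrix_vector_mult[of "r i" "r j" "transpose (R 0)"] nc[of 0] meas[OF ij(1)] meas[OF ij(2)]
    by auto
  then obtain c where c: "c > 0" "\<And>u. c * norm u \<le> norm (u \<times> r i) + norm (u \<times> r j)"
    using noncollinear_cross_coercive by blast
  \<comment> \<open>the bias error is recovered from its cross products with two non-collinear directions\<close>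
  have bound: "norm (\<eta> - \<eta>h t) \<le> (norm (coupling i t) + norm (coupling j t)) / c" if "t \<ge> 0" for t
  proof -
    have "orthogonal_matrix (R t)" using rotation[OF that] by (simp add: rotation_matrix_def)
    then have "norm (\<eta> - \<eta>h t) = norm (R t *v (\<eta> - \<eta>h t))"
      by (simp add: norm_orthogonal_matrix_mult_vec)
    moreover have "norm (coupling k t) = norm ((R t *v (\<eta> - \<eta>h t)) \<times> r k)" if "k \<in> I" for k
      unfolding coupling_def meas[OF that \<open>t \<ge> 0\<close>] by (rule norm_cross_transpose_rotation[OF rotation[OF \<open>t \<ge> 0\<close>]])
    ultimately show ?thesis
      using c(2)[of "R t *v (\<eta> - \<eta>h t)"] c(1) ij by (simp add: pos_le_divide_eq mult.commute)
  qed
  show ?thesis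
  proof (rule Lim_null_comparison)
    show "eventually (\<lambda>t. norm (\<eta> - \<eta>h t) \<le> (norm (coupling i t) + norm (coupling j t)) / c) at_top"
      by (rule eventually_mono[OF eventually_ge_at_top bound])
    show "((\<lambda>t. (norm (coupling i t) + norm (coupling j t)) / c) \<longlongrightarrow> 0) at_top"
      using tendsto_divide_zero[OF tendsto_add_zero[OF tendsto_norm_zero tendsto_norm_zero]]
        coupling_tendsto_zero[OF ij(1)] coupling_tendsto_zero[OF ij(2)] by blast
  qed
qed

end

theorem proposition1:
  fixes m n :: nat
    and \<gamma> :: "nat \<Rightarrow> nat \<Rightarrow> real"
    and Q P :: "nat \<Rightarrow> nat \<Rightarrow> nat \<Rightarrow> real^3^3"
    and \<Gamma> :: "real^3^3"
    and R :: "real \<Rightarrow> real^3^3"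
    and \<omega> \<omega>m :: "real \<Rightarrow> real^3"
    and \<eta> :: "real^3"
    and r :: "nat \<Rightarrow> real^3"
    and b bh :: "nat \<Rightarrow> real \<Rightarrow> real^3"
    and \<eta>h :: "real \<Rightarrow> real^3"
    and X :: "nat \<Rightarrow> nat \<Rightarrow> real \<Rightarrow> real^3"
  assumes n_pos: "n \<ge> 1"
    and hurwitz: "\<forall>i\<in>{1..m}. hurwitz_coeffs n (\<gamma> i)"
    and Q_spd: "\<forall>i\<in>{1..m}. blk_symmetric n (Q i) \<and> blk_posdef n (Q i)"
    and P_spd: "\<forall>i\<in>{1..m}. blk_symmetric n (P i) \<and> blk_posdef n (P i)
                   \<and> lyapunov_eq n (Ad n (\<gamma> i)) (P i) (Q i)"
    and Gamma_d: "diag_posdef \<Gamma>"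
    and attitude: "\<forall>t\<ge>0. rotation_matrix (R t) \<and>
                     (R has_vector_derivative (R t ** skew (\<omega> t))) (at t within {0..})"
    and meas: "\<forall>i\<in>{1..m}. \<forall>t\<ge>0. b i t = transpose (R t) *v r i"
    and gyro: "\<forall>t\<ge>0. \<omega>m t = \<omega> t + \<eta>"
    and gyro_bounded: "bounded (\<omega>m ` {0..})"
    and noncollinear: "\<exists>i\<in>{1..m}. \<exists>j\<in>{1..m}. \<forall>t\<ge>0. \<not> collinear {0, b i t, b j t}"
    and filt_x: "\<forall>i\<in>{1..m}. \<forall>j. j + 1 < n \<longrightarrow>
                   (\<forall>t\<ge>0. (X i j has_vector_derivative X i (j + 1) t) (at t within {0..}))"
    and filt_xn: "\<forall>i\<in>{1..m}. \<forall>t\<ge>0. X i (n - 1) t =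
                   - (\<Sum>k=1..n-1. \<gamma> i k *\<^sub>R X i (n - k - 1) t) + \<gamma> i n *\<^sub>R (b i t - bh i t)"
    and filt_b: "\<forall>i\<in>{1..m}. \<forall>t\<ge>0. (bh i has_vector_derivative
                   (- (skew (\<omega>m t - \<eta>h t) *v b i t) + X i 0 t)) (at t within {0..})"
    and filt_eta: "\<forall>t\<ge>0. (\<eta>h has_vector_derivative
                   (\<Gamma> *v (\<Sum>i=1..m. skew (b i t) *v upsilon n (\<gamma> i) (P i) (\<lambda>j. X i j t))))
                   (at t within {0..})"
  shows "(\<forall>i\<in>{1..m}. ((\<lambda>t. b i t - bh i t) \<longlongrightarrow> 0) at_top)
         \<and> ((\<lambda>t. \<eta> - \<eta>h t) \<longlongrightarrow> 0) at_top"
proof -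
  \<comment> \<open>of the Hurwitz property only \<open>\<gamma> i n \<noteq> 0\<close> is needed, since \<open>P i\<close> is given\<close>
  interpret direct_filter n "{1..m}" \<gamma> Q P \<Gamma> R \<omega> \<omega>m \<eta> r b bh \<eta>h X
    using assms hurwitz_coeffs_last_nonzero by unfold_locales auto
  show ?thesis using b_error_tendsto_zero bias_error_tendsto_zero by blast
qed

end
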